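(* Let $\mu$ be a monotone system over $\{0,1\}^V$ and $\theta\in(0,1)$. Then $P_{\mathrm{cl}}$, $P_{\mathrm{s\text{-}GD}}$ and $P_{\pi\text{-GD}}$ all belong to $\mathcal{MC}_\pi$, i.e. each is reversible with respect to $\pi$ and stochastically monotone.
   Context: Monotone system: for every $v$ and all feasible (positive probability) $\sigma\preceq\tau$ in $\{0,1\}^{V\setminus\{v\}}$ (coordinatewise), $\mu^\sigma_v(1)\le\mu^\tau_v(1)$. Tilted $(\theta*\mu)(\sigma)\propto\mu(\sigma)\theta^{\|\sigma\|_1}$. $\mathsf{lift}$: random map $\{0,1\}^V\to\{0,1,\star\}^V$, independently per coordinate $0\mapsto0$, $1\mapsto\star$ w.p. $1-\theta$, $1\mapsto1$ w.p. $\theta$. $\mathsf{contr}$: $0\mapsto0$, $1,\star\mapsto1$. $\pi$: law of $\mathsf{lift}(X)$, $X\sim\mu$, support $\Omega(\pi)$. $P_{\pi\text{-GD}}$: pick $v$ uniformly, resample $X_v$ from $\pi$ conditioned on $X_{V\setminus\{v\}}$. $P_{\mathrm{cl}}$: $X\mapsto\mathsf{lift}(\mathsf{contr}(X))$. $P_{\mathrm{s\text{-}GD}}$: pick $v$ uniformly; if $X_v=\star$ keep it; otherwise resample $X_v\in\{0,1\}$ from $(\theta*\mu)_v^{\sigma_{V\setminus\{v\}}}$ where $\sigma=\mathsf{contr}(X)$. Order $0<1<\star$, coordinatewise partial order on $\{0,1,\star\}^V$. A function $f:\Omega(\pi)\to\mathbb R_{\ge0}$ is increasing if $X\preceq Y\Rightarrow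 f(X)\le f(Y)$. A chain $P$ is stochastically monotone if $Pf$ is increasing for every increasing $f$. $P$ is reversible w.r.t. $\pi$ if $\pi(\sigma)P(\sigma,\tau)=\pi(\tau)P(\tau,\sigma)$ for all $\sigma,\tau$. *)

theory Defs
  imports Complex_Main
begin

datatype tri = Zero | One | Star

lemma UNIV_tri: "(UNIV :: tri set) = {Zero, One, Star}"
  using tri.exhaust by auto

instance tri :: finite
  by standard (simp add: UNIV_tri)

definition tri_rank :: "tri \<Rightarrow> nat" where
  "tri_rank t = (case t of Zero \<Rightarrow> 0 | One \<Rightarrow> 1 | Star \<Rightarrow> 2)"

definition tri_le :: "('v \<Rightarrow> tri) \<Rightarrow> ('v \<Rightarrow> tri) \<Rightarrow> bool" where
  "tri_le X Y \<longleftrightarrow> (\<forall>v. tri_rank (X v) \<le> tri_rank (Y v))"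

definition is_distr :: "('a::finite \<Rightarrow> real) \<Rightarrow> bool" where
  "is_distr \<nu> \<longleftrightarrow> (\<forall>x. 0 \<le> \<nu> x) \<and> sum \<nu> UNIV = 1"

text \<open>Conditional law of the spin at v given the configuration off v
  (the value of the argument configuration at v is irrelevant).\<close>
definition cond_marg :: "(('v \<Rightarrow> 'a::finite) \<Rightarrow> real) \<Rightarrow> 'v \<Rightarrow> ('v \<Rightarrow> 'a) \<Rightarrow> 'a \<Rightarrow> real" where
  "cond_marg \<nu> v \<sigma> a = \<nu> (\<sigma>(v := a)) / (\<Sum>b\<in>UNIV. \<nu> (\<sigma>(v := b)))"

definition feasible_pin :: "(('v \<Rightarrow> 'a::finite) \<Rightarrow> real) \<Rightarrow> 'v \<Rightarrow> ('v \<Rightarrow> 'a) \<Rightarrow> bool" where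
  "feasible_pin \<nu> v \<sigma> \<longleftrightarrow> (\<Sum>b\<in>UNIV. \<nu> (\<sigma>(v := b))) > 0"

definition monotone_system :: "(('v::finite \<Rightarrow> bool) \<Rightarrow> real) \<Rightarrow> bool" where
  "monotone_system \<mu> \<longleftrightarrow>
     (\<forall>v \<sigma> \<tau>. feasible_pin \<mu> v \<sigma> \<and> feasible_pin \<mu> v \<tau> \<and>
        (\<forall>u. u \<noteq> v \<longrightarrow> \<sigma> u \<le> \<tau> u) \<longrightarrow>
        cond_marg \<mu> v \<sigma> True \<le> cond_marg \<mu> v \<tau> True)"

definition tilt :: "real \<Rightarrow> (('v::finite \<Rightarrow> bool) \<Rightarrow> real) \<Rightarrow> ('v \<Rightarrow> bool) \<Rightarrow> real" where
  "tilt \<theta> \<mu> \<sigma> = \<mu> \<sigma> * \<theta> ^ card {v. \<sigma> v} /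
      (\<Sum>\<rho>\<in>UNIV. \<mu> \<rho> * \<theta> ^ card {v. \<rho> v})"

definition lift_prob :: "real \<Rightarrow> ('v::finite \<Rightarrow> bool) \<Rightarrow> ('v \<Rightarrow> tri) \<Rightarrow> real" where
  "lift_prob \<theta> \<sigma> X = (\<Prod>v\<in>UNIV. (case (\<sigma> v, X v) of
       (False, Zero) \<Rightarrow> 1 | (True, One) \<Rightarrow> \<theta> | (True, Star) \<Rightarrow> 1 - \<theta> | _ \<Rightarrow> 0))"

definition contr :: "('v \<Rightarrow> tri) \<Rightarrow> ('v \<Rightarrow> bool)" where
  "contr X = (\<lambda>v. X v \<noteq> Zero)"

definition lifted_pi :: "real \<Rightarrow> (('v::finite \<Rightarrow> bool) \<Rightarrow> real) \<Rightarrow> ('v \<Rightarrow> tri) \<Rightarrow> real" where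
  "lifted_pi \<theta> \<mu> X = (\<Sum>\<sigma>\<in>UNIV. \<mu> \<sigma> * lift_prob \<theta> \<sigma> X)"

definition supp :: "(('v::finite \<Rightarrow> tri) \<Rightarrow> real) \<Rightarrow> ('v \<Rightarrow> tri) set" where
  "supp \<pi> = {X. \<pi> X > 0}"

definition P_piGD :: "real \<Rightarrow> (('v::finite \<Rightarrow> bool) \<Rightarrow> real) \<Rightarrow> ('v \<Rightarrow> tri) \<Rightarrow> ('v \<Rightarrow> tri) \<Rightarrow> real" where
  "P_piGD \<theta> \<mu> X Y = (1 / real (card (UNIV :: 'v set))) *
     (\<Sum>v\<in>UNIV. if (\<forall>u. u \<noteq> v \<longrightarrow> Y u = X u)
                 then cond_marg (lifted_pi \<theta> \<mu>) v X (Y v) else 0)"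

definition P_cl :: "real \<Rightarrow> ('v::finite \<Rightarrow> tri) \<Rightarrow> ('v \<Rightarrow> tri) \<Rightarrow> real" where
  "P_cl \<theta> X Y = lift_prob \<theta> (contr X) Y"

definition P_sGD :: "real \<Rightarrow> (('v::finite \<Rightarrow> bool) \<Rightarrow> real) \<Rightarrow> ('v \<Rightarrow> tri) \<Rightarrow> ('v \<Rightarrow> tri) \<Rightarrow> real" where
  "P_sGD \<theta> \<mu> X Y = (1 / real (card (UNIV :: 'v set))) *
     (\<Sum>v\<in>UNIV.
        if X v = Star then (if Y = X then 1 else 0)
        else if (\<forall>u. u \<noteq> v \<longrightarrow> Y u = X u) \<and> Y v \<noteq> Star
          then cond_marg (tilt \<theta> \<mu>) v (contr X) (Y v = One) else 0)"

definition reversible_wrt ::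
  "(('v::finite \<Rightarrow> tri) \<Rightarrow> real) \<Rightarrow> (('v \<Rightarrow> tri) \<Rightarrow> ('v \<Rightarrow> tri) \<Rightarrow> real) \<Rightarrow> bool" where
  "reversible_wrt \<pi> P \<longleftrightarrow>
     (\<forall>\<sigma>\<in>supp \<pi>. \<forall>\<tau>\<in>supp \<pi>. \<pi> \<sigma> * P \<sigma> \<tau> = \<pi> \<tau> * P \<tau> \<sigma>)"

definition increasing_on :: "('v \<Rightarrow> tri) set \<Rightarrow> (('v \<Rightarrow> tri) \<Rightarrow> real) \<Rightarrow> bool" where
  "increasing_on \<Omega> f \<longleftrightarrow> (\<forall>X\<in>\<Omega>. \<forall>Y\<in>\<Omega>. tri_le X Y \<longrightarrow> f X \<le> f Y)"

definition stoch_monotone ::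
  "(('v::finite \<Rightarrow> tri) \<Rightarrow> real) \<Rightarrow> (('v \<Rightarrow> tri) \<Rightarrow> ('v \<Rightarrow> tri) \<Rightarrow> real) \<Rightarrow> bool" where
  "stoch_monotone \<pi> P \<longleftrightarrow>
     (\<forall>f. (\<forall>X\<in>supp \<pi>. 0 \<le> f X) \<and> increasing_on (supp \<pi>) f \<longrightarrow>
          increasing_on (supp \<pi>) (\<lambda>X. \<Sum>Y\<in>supp \<pi>. P X Y * f Y))"

definition MC :: "(('v::finite \<Rightarrow> tri) \<Rightarrow> real) \<Rightarrow> (('v \<Rightarrow> tri) \<Rightarrow> ('v \<Rightarrow> tri) \<Rightarrow> real) \<Rightarrow> bool" where
  "MC \<pi> P \<longleftrightarrow> reversible_wrt \<pi> P \<and> stoch_monotone \<pi> P"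

end

theory Submission
  imports Defs
begin

text \<open>Under the lift, \<pi>(X) = \<mu>(contr X) * \<Prod>u. w(X u) with w(0) = 1, w(1) = \<theta> and
  w(Star) = 1 - \<theta>; reversibility of the three chains is a direct computation with these weights.
  For monotonicity, an increasing function on the support of \<pi> is first extended to an increasing
  function F on all lifted configurations. For the contract-and-lift chain, E F(lift \<sigma>) increases
  in \<sigma>, because raising \<sigma> w from 0 to 1 replaces F(..0..) by \<theta> F(..1..) + (1 - \<theta>) F(..Star..).
  For both Glauber dynamics, an update at v mixes a lower and an upper value, the upper one with
  the conditional probability of a 1 at v under \<mu> (resp. under \<theta> * \<mu>); monotonicity of \<mu> makes
  this probability increase with the configuration, and such mixtures are then ordered.\<close>

section \<open>Finite sums and two-point mixtures\<close>

lemma sum_UNIV_bool: "(\<Sum>b\<in>UNIV. g b) = g False + (g True :: 'a::comm_monoid_add)"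
  by (simp add: UNIV_bool add.commute)

lemma sum_UNIV_tri: "(\<Sum>a\<in>UNIV. g a) = g Zero + g One + (g Star :: 'a::comm_monoid_add)"
  by (simp add: UNIV_tri add.assoc)

lemma sum_agree_off:
  fixes X :: "'v::finite \<Rightarrow> 'a::finite" and g :: "('v \<Rightarrow> 'a) \<Rightarrow> 'b::comm_monoid_add"
  shows "(\<Sum>Y\<in>UNIV. if \<forall>u. u \<noteq> v \<longrightarrow> Y u = X u then g Y else 0) = (\<Sum>a\<in>UNIV. g (X(v := a)))"
proof -
  have "{Y. \<forall>u. u \<noteq> v \<longrightarrow> Y u = X u} = range (\<lambda>a. X(v := a))"
    by (auto simp: image_iff fun_eq_iff)
  moreover have "inj (\<lambda>a. X(v := a))"
    by (rule injI) (metis fun_upd_same)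
  ultimately show ?thesis
    by (simp add: sum.If_cases sum.reindex)
qed

lemma sum_UNIV_split_coord:
  fixes G :: "('v::finite \<Rightarrow> 'a::finite) \<Rightarrow> 'b::comm_monoid_add"
  shows "(\<Sum>Y\<in>UNIV. G Y) = (\<Sum>Y | Y w = c. \<Sum>a\<in>UNIV. G (Y(w := a)))"
proof -
  have "bij_betw (\<lambda>(Y, a). Y(w := a)) ({Y. Y w = c} \<times> UNIV) UNIV"
    by (rule bij_betw_byWitness[where f' = "\<lambda>Y. (Y(w := c), Y w)"]) auto
  then have "(\<Sum>p\<in>{Y. Y w = c} \<times> UNIV. G ((\<lambda>(Y, a). Y(w := a)) p)) = (\<Sum>Y\<in>UNIV. G Y)"
    by (rule sum.reindex_bij_betw)
  then show ?thesis
    by (simp add: sum.cartesian_product case_prod_beta)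
qed

lemma convex_comb_mono:
  fixes p p' A B A' B' :: real
  assumes "0 \<le> p" "p \<le> p'" "p' \<le> 1" "A \<le> B" "A \<le> A'" "B \<le> B'"
  shows "(1 - p) * A + p * B \<le> (1 - p') * A' + p' * B'"
proof -
  have "(1 - p) * A + p * B = (1 - p') * A + p' * B - (p' - p) * (B - A)"
    by (simp add: algebra_simps)
  also have "\<dots> \<le> (1 - p') * A + p' * B"
    using assms by simp
  also have "\<dots> \<le> (1 - p') * A' + p' * B'"
    using assms by (intro add_mono mult_left_mono) auto
  finally show ?thesis .
qed

lemma frac_le_frac_iff_cross:
  fixes a b a' b' :: real
  assumes "0 \<le> a" "0 \<le> b" "0 < a + b" "0 \<le> a'" "0 \<le> b'" "0 < a' + b'"
  shows "b / (a + b) \<le> b' / (a' + b') \<longleftrightarrow> b * a' \<le> b' * a"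
  using assms by (simp add: field_simps)

section \<open>A criterion for stochastic monotonicity\<close>

lemma tri_le_refl: "tri_le X X"
  unfolding tri_le_def by simp

lemma tri_le_trans: "tri_le X Y \<Longrightarrow> tri_le Y Z \<Longrightarrow> tri_le X Z"
  unfolding tri_le_def by (meson order_trans)

lemma tri_le_fun_upd_Zero: "tri_le (X(v := Zero)) (X(v := a))"
  unfolding tri_le_def by (simp add: tri_rank_def)

lemma tri_le_fun_upd: "tri_le X X' \<Longrightarrow> tri_le (X(v := a)) (X'(v := a))"
  unfolding tri_le_def by simp

lemma tri_le_fun_upd_Star: "tri_le X X' \<Longrightarrow> X' v = Star \<Longrightarrow> tri_le (X(v := a)) X'"
  unfolding tri_le_def tri_rank_def by (auto split: tri.splits)

lemma tri_le_not_Star: "tri_le X X' \<Longrightarrow> X' v \<noteq> Star \<Longrightarrow> X v \<noteq> Star"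
  unfolding tri_le_def tri_rank_def by (drule spec[of _ v]) (auto split: tri.splits)

lemma tri_le_contr: "tri_le X X' \<Longrightarrow> contr X \<le> contr X'"
proof (rule le_funI)
  fix u
  assume "tri_le X X'"
  then have "tri_rank (X u) \<le> tri_rank (X' u)"
    unfolding tri_le_def by simp
  then show "contr X u \<le> contr X' u"
    by (cases "X u"; cases "X' u") (simp_all add: contr_def tri_rank_def)
qed

lemma increasing_extension:
  fixes f :: "('v::finite \<Rightarrow> tri) \<Rightarrow> real"
  assumes "\<forall>X\<in>S. 0 \<le> f X" and "increasing_on S f"
  obtains F where "monotone tri_le (\<le>) F" and "\<And>X. X \<in> S \<Longrightarrow> F X = f X"
proof
  define F where "F Y = Max (insert 0 (f ` {Z\<in>S. tri_le Z Y}))" for Y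
  show "monotone tri_le (\<le>) F"
    by (rule monotoneI) (auto simp: F_def intro!: Max_mono dest: tri_le_trans)
  show "F X = f X" if "X \<in> S" for X
    unfolding F_def
    using assms that tri_le_refl[of X] by (intro Max_eqI) (auto simp: increasing_on_def)
qed

lemma stoch_monotoneI:
  fixes \<pi> :: "('v::finite \<Rightarrow> tri) \<Rightarrow> real"
  assumes zero: "\<And>X Y. X \<in> supp \<pi> \<Longrightarrow> Y \<notin> supp \<pi> \<Longrightarrow> P X Y = 0"
    and mono: "\<And>F X X'. monotone tri_le (\<le>) F \<Longrightarrow> X \<in> supp \<pi> \<Longrightarrow> X' \<in> supp \<pi> \<Longrightarrow>
      tri_le X X' \<Longrightarrow> (\<Sum>Y\<in>UNIV. P X Y * F Y) \<le> (\<Sum>Y\<in>UNIV. P X' Y * F Y)"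
  shows "stoch_monotone \<pi> P"
  unfolding stoch_monotone_def
proof (intro allI impI)
  fix f :: "('v \<Rightarrow> tri) \<Rightarrow> real"
  assume "(\<forall>X\<in>supp \<pi>. 0 \<le> f X) \<and> increasing_on (supp \<pi>) f"
  then obtain F where F: "monotone tri_le (\<le>) F" and F_eq: "\<And>X. X \<in> supp \<pi> \<Longrightarrow> F X = f X"
    using increasing_extension by blast
  have "(\<Sum>Y\<in>supp \<pi>. P X Y * f Y) = (\<Sum>Y\<in>UNIV. P X Y * F Y)" if "X \<in> supp \<pi>" for X
    using zero[OF that] F_eq by (intro sum.mono_neutral_cong_left) auto
  then show "increasing_on (supp \<pi>) (\<lambda>X. \<Sum>Y\<in>supp \<pi>. P X Y * f Y)"
    unfolding increasing_on_def using mono[OF F] by simp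
qed

definition site_average :: "('s::finite \<Rightarrow> 'x \<Rightarrow> 'x \<Rightarrow> real) \<Rightarrow> 'x \<Rightarrow> 'x \<Rightarrow> real" where
  "site_average K X Y = 1 / real (card (UNIV :: 's set)) * (\<Sum>v\<in>UNIV. K v X Y)"

lemma reversible_wrt_site_average:
  fixes K :: "'s::finite \<Rightarrow> ('v::finite \<Rightarrow> tri) \<Rightarrow> ('v \<Rightarrow> tri) \<Rightarrow> real"
  assumes "\<And>v X Y. X \<in> supp \<pi> \<Longrightarrow> Y \<in> supp \<pi> \<Longrightarrow> \<pi> X * K v X Y = \<pi> Y * K v Y X"
  shows "reversible_wrt \<pi> (site_average K)"
proof -
  have "\<pi> X * site_average K X Y = 1 / real (card (UNIV :: 's set)) * (\<Sum>v\<in>UNIV. \<pi> X * K v X Y)"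
    for X Y
    unfolding site_average_def by (simp add: sum_distrib_left mult.left_commute)
  then show ?thesis
    unfolding reversible_wrt_def using assms by simp
qed

lemma stoch_monotone_site_average:
  fixes K :: "'s::finite \<Rightarrow> ('v::finite \<Rightarrow> tri) \<Rightarrow> ('v \<Rightarrow> tri) \<Rightarrow> real"
  assumes zero: "\<And>v X Y. X \<in> supp \<pi> \<Longrightarrow> Y \<notin> supp \<pi> \<Longrightarrow> K v X Y = 0"
    and mono: "\<And>v F X X'. monotone tri_le (\<le>) F \<Longrightarrow> X \<in> supp \<pi> \<Longrightarrow> X' \<in> supp \<pi> \<Longrightarrow>
      tri_le X X' \<Longrightarrow> (\<Sum>Y\<in>UNIV. K v X Y * F Y) \<le> (\<Sum>Y\<in>UNIV. K v X' Y * F Y)"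
  shows "stoch_monotone \<pi> (site_average K)"
proof (rule stoch_monotoneI)
  show "site_average K X Y = 0" if "X \<in> supp \<pi>" and "Y \<notin> supp \<pi>" for X Y
    unfolding site_average_def using zero[OF that] by simp
next
  have swap: "(\<Sum>Y\<in>UNIV. site_average K X Y * F Y) = 1 / real (card (UNIV :: 's set)) * (\<Sum>v\<in>UNIV. \<Sum>Y\<in>UNIV. K v X Y * F Y)"
    for X and F :: "('v \<Rightarrow> tri) \<Rightarrow> real"
    unfolding site_average_def
    by (simp add: sum_distrib_left sum_distrib_right mult.assoc) (rule sum.swap)
  fix F :: "('v \<Rightarrow> tri) \<Rightarrow> real" and X X' :: "'v \<Rightarrow> tri"
  assume "monotone tri_le (\<le>) F" "X \<in> supp \<pi>" "X' \<in> supp \<pi>" "tri_le X X'"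
  then show "(\<Sum>Y\<in>UNIV. site_average K X Y * F Y) \<le> (\<Sum>Y\<in>UNIV. site_average K X' Y * F Y)"
    unfolding swap by (intro mult_left_mono sum_mono mono) auto
qed

section \<open>The lifted measure\<close>

lemma contr_fun_upd: "contr (X(v := a)) = (contr X)(v := a \<noteq> Zero)"
  unfolding contr_def by auto

definition spin_weight :: "real \<Rightarrow> tri \<Rightarrow> real" where
  "spin_weight \<theta> a = (case a of Zero \<Rightarrow> 1 | One \<Rightarrow> \<theta> | Star \<Rightarrow> 1 - \<theta>)"

definition config_weight :: "real \<Rightarrow> ('v::finite \<Rightarrow> tri) \<Rightarrow> real" where
  "config_weight \<theta> X = (\<Prod>u\<in>UNIV. spin_weight \<theta> (X u))"

definition config_weight_off :: "real \<Rightarrow> 'v \<Rightarrow> ('v::finite \<Rightarrow> tri) \<Rightarrow> real" where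
  "config_weight_off \<theta> v X = (\<Prod>u\<in>UNIV - {v}. spin_weight \<theta> (X u))"

lemma spin_weight_pos: "0 < \<theta> \<Longrightarrow> \<theta> < 1 \<Longrightarrow> 0 < spin_weight \<theta> a"
  by (cases a) (simp_all add: spin_weight_def)

lemma config_weight_pos: "0 < \<theta> \<Longrightarrow> \<theta> < 1 \<Longrightarrow> 0 < config_weight \<theta> X"
  unfolding config_weight_def by (simp add: prod_pos spin_weight_pos)

lemma config_weight_off_pos: "0 < \<theta> \<Longrightarrow> \<theta> < 1 \<Longrightarrow> 0 < config_weight_off \<theta> v X"
  unfolding config_weight_off_def by (simp add: prod_pos spin_weight_pos)

lemma config_weight_off_fun_upd: "config_weight_off \<theta> v (X(v := a)) = config_weight_off \<theta> v X"
  unfolding config_weight_off_def by (rule prod.cong) auto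

lemma config_weight_fun_upd:
  "config_weight \<theta> (X(v := a)) = spin_weight \<theta> a * config_weight_off \<theta> v X"
proof -
  have "config_weight \<theta> Y = spin_weight \<theta> (Y v) * config_weight_off \<theta> v Y" for Y
    unfolding config_weight_def config_weight_off_def by (simp add: prod.remove[of UNIV v])
  from this[of "X(v := a)"] show ?thesis
    by (simp add: config_weight_off_fun_upd)
qed

lemma lift_prob_eq: "lift_prob \<theta> \<sigma> X = (if contr X = \<sigma> then config_weight \<theta> X else 0)"
proof (cases "contr X = \<sigma>")
  case True
  then show ?thesis
    unfolding lift_prob_def config_weight_def
    by (auto intro!: prod.cong simp: contr_def spin_weight_def split: tri.splits)
next
  case False
  then obtain u where "(X u \<noteq> Zero) \<noteq> \<sigma> u"
    unfolding contr_def by auto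
  then have "lift_prob \<theta> \<sigma> X = 0"
    unfolding lift_prob_def
    by (intro prod_zero bexI[of _ u] UNIV_I) (auto split: tri.splits bool.splits)
  with False show ?thesis by simp
qed

lemma lifted_pi_eq: "lifted_pi \<theta> \<mu> X = \<mu> (contr X) * config_weight \<theta> X"
  unfolding lifted_pi_def lift_prob_eq by (simp add: if_distrib cong: if_cong)

lemma lifted_pi_nonneg:
  "(\<And>\<rho>. 0 \<le> \<mu> \<rho>) \<Longrightarrow> 0 < \<theta> \<Longrightarrow> \<theta> < 1 \<Longrightarrow> 0 \<le> lifted_pi \<theta> \<mu> X"
  unfolding lifted_pi_eq using config_weight_pos[of \<theta> X] by simp

lemma supp_lifted_pi_iff:
  "0 < \<theta> \<Longrightarrow> \<theta> < 1 \<Longrightarrow> X \<in> supp (lifted_pi \<theta> \<mu>) \<longleftrightarrow> 0 < \<mu> (contr X)"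
  unfolding supp_def lifted_pi_eq using config_weight_pos[of \<theta> X]
  by (simp add: zero_less_mult_iff)

lemma cond_marg_lifted_pi:
  assumes "0 < \<theta>" and "\<theta> < 1"
  shows "cond_marg (lifted_pi \<theta> \<mu>) v X a = spin_weight \<theta> a * cond_marg \<mu> v (contr X) (a \<noteq> Zero)"
proof -
  define W where "W = config_weight_off \<theta> v X"
  have "0 < W"
    unfolding W_def using config_weight_off_pos[OF assms] .
  have "lifted_pi \<theta> \<mu> (X(v := b)) = spin_weight \<theta> b * \<mu> ((contr X)(v := b \<noteq> Zero)) * W" for b
    unfolding lifted_pi_eq contr_fun_upd config_weight_fun_upd W_def by simp
  moreover have "(\<Sum>b\<in>UNIV. spin_weight \<theta> b * \<mu> ((contr X)(v := b \<noteq> Zero)) * W) =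
      (\<Sum>c\<in>UNIV. \<mu> ((contr X)(v := c))) * W"
    by (simp add: sum_UNIV_tri sum_UNIV_bool spin_weight_def algebra_simps)
  ultimately show ?thesis
    using \<open>0 < W\<close> by (simp add: cond_marg_def)
qed

section \<open>Conditional marginals of a binary system and of its tilt\<close>

lemma cond_marg_fun_upd [simp]: "cond_marg \<nu> v (\<sigma>(v := c)) = cond_marg \<nu> v \<sigma>"
  by (simp add: cond_marg_def fun_eq_iff)

lemma pin_sum_pos:
  fixes \<mu> :: "('v \<Rightarrow> bool) \<Rightarrow> real"
  assumes "\<And>\<rho>. 0 \<le> \<mu> \<rho>" and "0 < \<mu> \<sigma>"
  shows "0 < \<mu> (\<sigma>(v := False)) + \<mu> (\<sigma>(v := True))"
proof -
  have "\<sigma> = \<sigma>(v := False) \<or> \<sigma> = \<sigma>(v := True)"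
    by (cases "\<sigma> v") (simp_all add: fun_upd_idem)
  then show ?thesis
    using assms(1)[of "\<sigma>(v := False)"] assms(1)[of "\<sigma>(v := True)"] assms(2) by auto
qed

lemma feasible_pin_of_pos:
  fixes \<mu> :: "('v \<Rightarrow> bool) \<Rightarrow> real"
  shows "(\<And>\<rho>. 0 \<le> \<mu> \<rho>) \<Longrightarrow> 0 < \<mu> \<sigma> \<Longrightarrow> feasible_pin \<mu> v \<sigma>"
  by (simp add: feasible_pin_def sum_UNIV_bool pin_sum_pos)

lemma cond_marg_True_eq:
  fixes \<mu> :: "('v \<Rightarrow> bool) \<Rightarrow> real"
  shows "cond_marg \<mu> v \<sigma> True = \<mu> (\<sigma>(v := True)) / (\<mu> (\<sigma>(v := False)) + \<mu> (\<sigma>(v := True)))"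
  unfolding cond_marg_def sum_UNIV_bool by simp

lemma cond_marg_False_eq:
  fixes \<mu> :: "('v \<Rightarrow> bool) \<Rightarrow> real"
  assumes "\<And>\<rho>. 0 \<le> \<mu> \<rho>" and "0 < \<mu> \<sigma>"
  shows "cond_marg \<mu> v \<sigma> False = 1 - cond_marg \<mu> v \<sigma> True"
  using pin_sum_pos[of \<mu>, OF assms, of v] by (simp add: cond_marg_def sum_UNIV_bool field_simps)

lemma cond_marg_True_bounds:
  fixes \<mu> :: "('v \<Rightarrow> bool) \<Rightarrow> real"
  assumes "\<And>\<rho>. 0 \<le> \<mu> \<rho>" and "0 < \<mu> \<sigma>"
  shows "0 \<le> cond_marg \<mu> v \<sigma> True" and "cond_marg \<mu> v \<sigma> True \<le> 1"
  using pin_sum_pos[of \<mu>, OF assms, of v] assms(1)[of "\<sigma>(v := False)"] assms(1)[of "\<sigma>(v := True)"]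
  by (simp_all add: cond_marg_True_eq)

lemma monotone_systemD:
  fixes \<mu> :: "('v::finite \<Rightarrow> bool) \<Rightarrow> real"
  assumes "monotone_system \<mu>" and "\<And>\<rho>. 0 \<le> \<mu> \<rho>" and "0 < \<mu> \<sigma>" and "0 < \<mu> \<sigma>'" and "\<sigma> \<le> \<sigma>'"
  shows "cond_marg \<mu> v \<sigma> True \<le> cond_marg \<mu> v \<sigma>' True"
  using assms unfolding monotone_system_def by (meson feasible_pin_of_pos le_funD)

lemma tilted_pin_sum_pos:
  fixes \<mu> :: "('v \<Rightarrow> bool) \<Rightarrow> real"
  assumes "\<And>\<rho>. 0 \<le> \<mu> \<rho>" and "0 < \<mu> \<sigma>" and "0 < \<theta>"
  shows "0 < \<mu> (\<sigma>(v := False)) + \<theta> * \<mu> (\<sigma>(v := True))"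
proof (cases "\<mu> (\<sigma>(v := True)) = 0")
  case True
  then show ?thesis using pin_sum_pos[of \<mu>, OF assms(1,2), of v] by simp
next
  case False
  then have "0 < \<theta> * \<mu> (\<sigma>(v := True))"
    using assms(1)[of "\<sigma>(v := True)"] assms(3) by (simp add: less_le)
  then show ?thesis using assms(1)[of "\<sigma>(v := False)"] by linarith
qed

lemma cond_marg_tilt:
  fixes \<mu> :: "('v::finite \<Rightarrow> bool) \<Rightarrow> real"
  assumes nonneg: "\<And>\<rho>. 0 \<le> \<mu> \<rho>" and pos: "0 < \<mu> \<sigma>" and \<theta>: "0 < \<theta>"
  shows "cond_marg (tilt \<theta> \<mu>) v \<sigma> b =
    (if b then \<theta> * \<mu> (\<sigma>(v := True)) else \<mu> (\<sigma>(v := False))) /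
    (\<mu> (\<sigma>(v := False)) + \<theta> * \<mu> (\<sigma>(v := True)))"
proof -
  define N where "N = (\<Sum>\<rho>\<in>UNIV. \<mu> \<rho> * \<theta> ^ card {v. \<rho> v})"
  define k where "k = card (Collect (\<sigma>(v := False)))"
  define w where "w c = (if c then \<theta> * \<mu> (\<sigma>(v := True)) else \<mu> (\<sigma>(v := False)))" for c
  have "0 < N"
    unfolding N_def using nonneg pos \<theta> by (intro sum_pos2[where i = \<sigma>]) auto
  have card_upd: "card (Collect (\<sigma>(v := c))) = (if c then Suc k else k)" for c
  proof (cases c)
    case True
    have "Collect (\<sigma>(v := True)) = insert v (Collect (\<sigma>(v := False)))"
      by auto
    with True show ?thesis
      unfolding k_def by (simp only:) (simp add: card_insert_disjoint)
  qed (simp add: k_def)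
  define q where "q = \<theta> ^ k / N"
  have tilt_upd: "tilt \<theta> \<mu> (\<sigma>(v := c)) = w c * q" for c
    unfolding tilt_def N_def[symmetric] card_upd w_def q_def by (cases c) simp_all
  have "0 < q"
    unfolding q_def using \<open>0 < N\<close> \<theta> by simp
  then show ?thesis
    unfolding cond_marg_def tilt_upd sum_UNIV_bool w_def[symmetric]
    by (simp add: distrib_right[symmetric] w_def)
qed

lemma cond_marg_tilt_False:
  fixes \<mu> :: "('v::finite \<Rightarrow> bool) \<Rightarrow> real"
  assumes "\<And>\<rho>. 0 \<le> \<mu> \<rho>" and "0 < \<mu> \<sigma>" and "0 < \<theta>"
  shows "cond_marg (tilt \<theta> \<mu>) v \<sigma> False = 1 - cond_marg (tilt \<theta> \<mu>) v \<sigma> True"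
  using tilted_pin_sum_pos[of \<mu>, OF assms, of v] by (simp add: cond_marg_tilt[of \<mu>, OF assms] field_simps)

lemma cond_marg_tilt_True_bounds:
  fixes \<mu> :: "('v::finite \<Rightarrow> bool) \<Rightarrow> real"
  assumes "\<And>\<rho>. 0 \<le> \<mu> \<rho>" and "0 < \<mu> \<sigma>" and "0 < \<theta>"
  shows "0 \<le> cond_marg (tilt \<theta> \<mu>) v \<sigma> True" and "cond_marg (tilt \<theta> \<mu>) v \<sigma> True \<le> 1"
  using tilted_pin_sum_pos[of \<mu>, OF assms, of v] assms(1)[of "\<sigma>(v := False)"] assms(1)[of "\<sigma>(v := True)"] assms(3)
  by (simp_all add: cond_marg_tilt[of \<mu>, OF assms])

lemma cond_marg_tilt_mono:
  fixes \<mu> :: "('v::finite \<Rightarrow> bool) \<Rightarrow> real"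
  assumes "monotone_system \<mu>" and nonneg: "\<And>\<rho>. 0 \<le> \<mu> \<rho>" and pos: "0 < \<mu> \<sigma>" "0 < \<mu> \<sigma>'"
    and "\<sigma> \<le> \<sigma>'" and \<theta>: "0 < \<theta>"
  shows "cond_marg (tilt \<theta> \<mu>) v \<sigma> True \<le> cond_marg (tilt \<theta> \<mu>) v \<sigma>' True"
proof -
  define a where "a = \<mu> (\<sigma>(v := False))"
  define b where "b = \<mu> (\<sigma>(v := True))"
  define a' where "a' = \<mu> (\<sigma>'(v := False))"
  define b' where "b' = \<mu> (\<sigma>'(v := True))"
  have nonneg_abs: "0 \<le> a" "0 \<le> b" "0 \<le> a'" "0 \<le> b'"
    unfolding a_def b_def a'_def b'_def using nonneg by auto
  have sums: "0 < a + b" "0 < a' + b'" "0 < a + \<theta> * b" "0 < a' + \<theta> * b'"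
    unfolding a_def b_def a'_def b'_def
    using pin_sum_pos[of \<mu>, OF nonneg pos(1)] pin_sum_pos[of \<mu>, OF nonneg pos(2)]
      tilted_pin_sum_pos[of \<mu>, OF nonneg pos(1) \<theta>] tilted_pin_sum_pos[of \<mu>, OF nonneg pos(2) \<theta>]
    by auto
  have "b / (a + b) \<le> b' / (a' + b')"
    using monotone_systemD[of \<mu>, OF assms(1-5), of v] unfolding cond_marg_True_eq a_def b_def a'_def b'_def .
  then have "b * a' \<le> b' * a"
    using frac_le_frac_iff_cross nonneg_abs sums by blast
  \<comment> \<open>tilting multiplies the odds of a 1 at v by \<theta>, which preserves their order\<close>
  then have "(\<theta> * b) * a' \<le> (\<theta> * b') * a"
    using \<theta> by (simp add: mult.assoc)
  then have "(\<theta> * b) / (a + \<theta> * b) \<le> (\<theta> * b') / (a' + \<theta> * b')"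
    using frac_le_frac_iff_cross[of a "\<theta> * b" a' "\<theta> * b'"] nonneg_abs sums \<theta> by simp
  then show ?thesis
    unfolding cond_marg_tilt[of \<mu>, OF nonneg pos(1) \<theta>] cond_marg_tilt[of \<mu>, OF nonneg pos(2) \<theta>]
      a_def b_def a'_def b'_def by simp
qed

section \<open>The contract-and-lift chain\<close>

definition upper_mix :: "real \<Rightarrow> (('v \<Rightarrow> tri) \<Rightarrow> real) \<Rightarrow> 'v \<Rightarrow> ('v \<Rightarrow> tri) \<Rightarrow> real" where
  "upper_mix \<theta> F v X = \<theta> * F (X(v := One)) + (1 - \<theta>) * F (X(v := Star))"

lemma upper_mix_ge_Zero:
  assumes "monotone tri_le (\<le>) F" and "0 \<le> \<theta>" and "\<theta> \<le> 1"
  shows "F (X(v := Zero)) \<le> upper_mix \<theta> F v X"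
proof -
  have "F (X(v := Zero)) \<le> F (X(v := a))" for a
    by (rule monotoneD[OF assms(1)], rule tri_le_fun_upd_Zero)
  then have "\<theta> * F (X(v := Zero)) + (1 - \<theta>) * F (X(v := Zero)) \<le> upper_mix \<theta> F v X"
    unfolding upper_mix_def using assms(2,3) by (intro add_mono mult_left_mono) auto
  then show ?thesis by (simp add: algebra_simps)
qed

lemma upper_mix_mono:
  assumes "monotone tri_le (\<le>) F" and "0 \<le> \<theta>" and "\<theta> \<le> 1" and "tri_le X X'"
  shows "upper_mix \<theta> F v X \<le> upper_mix \<theta> F v X'"
  unfolding upper_mix_def using assms
  by (intro add_mono mult_left_mono monotoneD[OF assms(1)] tri_le_fun_upd) auto

definition lift_expect :: "real \<Rightarrow> (('v::finite \<Rightarrow> tri) \<Rightarrow> real) \<Rightarrow> ('v \<Rightarrow> bool) \<Rightarrow> real" where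
  "lift_expect \<theta> F \<sigma> = (\<Sum>Y\<in>UNIV. lift_prob \<theta> \<sigma> Y * F Y)"

lemma lift_expect_coord_sum:
  assumes "Y w = Zero"
  shows "(\<Sum>a\<in>UNIV. lift_prob \<theta> (\<sigma>(w := b)) (Y(w := a)) * F (Y(w := a))) =
    (if contr Y = \<sigma>(w := False)
     then config_weight_off \<theta> w Y * (if b then upper_mix \<theta> F w Y else F (Y(w := Zero)))
     else 0)"
proof -
  have "contr Y w = False"
    using assms by (simp add: contr_def)
  then have "(contr Y)(w := c) = \<sigma>(w := b) \<longleftrightarrow> c = b \<and> contr Y = \<sigma>(w := False)" for c
    by (auto simp: fun_eq_iff)
  then show ?thesis
    by (simp add: sum_UNIV_tri lift_prob_eq contr_fun_upd config_weight_fun_upd upper_mix_def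
        spin_weight_def algebra_simps)
qed

lemma lift_expect_fun_upd_mono:
  fixes F :: "('v::finite \<Rightarrow> tri) \<Rightarrow> real"
  assumes F: "monotone tri_le (\<le>) F" and "0 < \<theta>" and "\<theta> < 1"
  shows "lift_expect \<theta> F (\<sigma>(w := False)) \<le> lift_expect \<theta> F (\<sigma>(w := True))"
  unfolding lift_expect_def sum_UNIV_split_coord[where w = w and c = Zero]
proof (rule sum_mono)
  fix Y :: "'v \<Rightarrow> tri"
  assume "Y \<in> {Y. Y w = Zero}"
  then show "(\<Sum>a\<in>UNIV. lift_prob \<theta> (\<sigma>(w := False)) (Y(w := a)) * F (Y(w := a)))
      \<le> (\<Sum>a\<in>UNIV. lift_prob \<theta> (\<sigma>(w := True)) (Y(w := a)) * F (Y(w := a)))"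
    using upper_mix_ge_Zero[OF F, of \<theta> Y w] config_weight_off_pos[of \<theta> w Y] assms(2,3)
    by (simp add: lift_expect_coord_sum)
qed

lemma lift_expect_mono:
  fixes F :: "('v::finite \<Rightarrow> tri) \<Rightarrow> real"
  assumes F: "monotone tri_le (\<le>) F" and \<theta>: "0 < \<theta>" "\<theta> < 1" and "\<sigma> \<le> \<sigma>'"
  shows "lift_expect \<theta> F \<sigma> \<le> lift_expect \<theta> F \<sigma>'"
proof -
  have "lift_expect \<theta> F \<sigma> \<le> lift_expect \<theta> F (\<lambda>u. \<sigma> u \<or> u \<in> D)" if "finite D" for D
    using that
  proof (induction D rule: finite_induct)
    case (insert w D)
    define \<tau> where "\<tau> = (\<lambda>u. \<sigma> u \<or> u \<in> D)"
    have "lift_expect \<theta> F \<tau> \<le> lift_expect \<theta> F (\<tau>(w := True))"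
      using lift_expect_fun_upd_mono[OF F \<theta>, of \<tau> w] by (cases "\<tau> w") (simp_all add: fun_upd_idem)
    moreover have "\<tau>(w := True) = (\<lambda>u. \<sigma> u \<or> u \<in> insert w D)"
      unfolding \<tau>_def by (auto simp: fun_eq_iff)
    ultimately show ?case
      using insert.IH unfolding \<tau>_def by simp
  qed simp
  moreover have "\<sigma>' = (\<lambda>u. \<sigma> u \<or> u \<in> {u. \<sigma>' u})"
    using \<open>\<sigma> \<le> \<sigma>'\<close> by (auto simp: le_fun_def)
  ultimately show ?thesis by (metis finite)
qed

lemma P_cl_MC:
  fixes \<mu> :: "('v::finite \<Rightarrow> bool) \<Rightarrow> real"
  assumes \<theta>: "0 < \<theta>" "\<theta> < 1"
  shows "MC (lifted_pi \<theta> \<mu>) (P_cl \<theta>)"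
  unfolding MC_def
proof
  show "reversible_wrt (lifted_pi \<theta> \<mu>) (P_cl \<theta>)"
    unfolding reversible_wrt_def P_cl_def lifted_pi_eq lift_prob_eq by auto
  show "stoch_monotone (lifted_pi \<theta> \<mu>) (P_cl \<theta>)"
  proof (rule stoch_monotoneI)
    fix X Y :: "'v \<Rightarrow> tri"
    assume "X \<in> supp (lifted_pi \<theta> \<mu>)" and "Y \<notin> supp (lifted_pi \<theta> \<mu>)"
    then show "P_cl \<theta> X Y = 0"
      unfolding supp_lifted_pi_iff[OF \<theta>] P_cl_def lift_prob_eq by auto
  next
    fix F :: "('v \<Rightarrow> tri) \<Rightarrow> real" and X X' :: "'v \<Rightarrow> tri"
    assume "monotone tri_le (\<le>) F" and "tri_le X X'"
    from lift_expect_mono[OF this(1) \<theta> tri_le_contr[OF this(2)]]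
    show "(\<Sum>Y\<in>UNIV. P_cl \<theta> X Y * F Y) \<le> (\<Sum>Y\<in>UNIV. P_cl \<theta> X' Y * F Y)"
      unfolding lift_expect_def P_cl_def .
  qed
qed

section \<open>The star-preserving Glauber dynamics\<close>

definition sgd_site :: "real \<Rightarrow> (('v::finite \<Rightarrow> bool) \<Rightarrow> real) \<Rightarrow> 'v \<Rightarrow> ('v \<Rightarrow> tri) \<Rightarrow> ('v \<Rightarrow> tri) \<Rightarrow> real" where
  "sgd_site \<theta> \<mu> v X Y =
     (if X v = Star then (if Y = X then 1 else 0)
      else if (\<forall>u. u \<noteq> v \<longrightarrow> Y u = X u) \<and> Y v \<noteq> Star
        then cond_marg (tilt \<theta> \<mu>) v (contr X) (Y v = One) else 0)"

lemma P_sGD_eq_site_average: "P_sGD \<theta> \<mu> = site_average (sgd_site \<theta> \<mu>)"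
  by (simp add: fun_eq_iff P_sGD_def site_average_def sgd_site_def)

lemma sgd_site_sum:
  "(\<Sum>Y\<in>UNIV. sgd_site \<theta> \<mu> v X Y * F Y) =
    (if X v = Star then F X
     else cond_marg (tilt \<theta> \<mu>) v (contr X) False * F (X(v := Zero)) +
          cond_marg (tilt \<theta> \<mu>) v (contr X) True * F (X(v := One)))"
proof (cases "X v = Star")
  case True
  then have "sgd_site \<theta> \<mu> v X Y * F Y = (if Y = X then F X else 0)" for Y
    by (simp add: sgd_site_def)
  with True show ?thesis by simp
next
  case False
  then have "sgd_site \<theta> \<mu> v X Y * F Y = (if \<forall>u. u \<noteq> v \<longrightarrow> Y u = X u then
      (if Y v \<noteq> Star then cond_marg (tilt \<theta> \<mu>) v (contr X) (Y v = One) else 0) * F Y else 0)" for Y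
    by (auto simp: sgd_site_def)
  with False show ?thesis
    by (simp add: sum_agree_off sum_UNIV_tri)
qed

lemma sgd_site_zero_outside_supp:
  fixes \<mu> :: "('v::finite \<Rightarrow> bool) \<Rightarrow> real"
  assumes "\<And>\<rho>. 0 \<le> \<mu> \<rho>" and "0 < \<mu> (contr X)" and "\<not> 0 < \<mu> (contr Y)"
  shows "sgd_site \<theta> \<mu> v X Y = 0"
proof -
  have "\<mu> (contr Y) = 0"
    using assms(1)[of "contr Y"] assms(3) by simp
  moreover have "(contr X)(v := Y v = One) = contr Y"
    if "\<forall>u. u \<noteq> v \<longrightarrow> Y u = X u" and "Y v \<noteq> Star"
    using that by (cases "Y v") (auto simp: contr_def fun_eq_iff)
  moreover have "Y \<noteq> X"
    using assms(2,3) by auto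
  ultimately show ?thesis
    by (auto simp: sgd_site_def cond_marg_def tilt_def)
qed

lemma sgd_site_detailed_balance:
  fixes \<mu> :: "('v::finite \<Rightarrow> bool) \<Rightarrow> real"
  assumes nonneg: "\<And>\<rho>. 0 \<le> \<mu> \<rho>" and \<theta>: "0 < \<theta>" and pos: "0 < \<mu> (contr X)" and "X v = Zero"
  shows "lifted_pi \<theta> \<mu> X * sgd_site \<theta> \<mu> v X (X(v := One)) =
    lifted_pi \<theta> \<mu> (X(v := One)) * sgd_site \<theta> \<mu> v (X(v := One)) X"
proof -
  define \<sigma> where "\<sigma> = contr X"
  have \<sigma>_upd: "\<sigma>(v := False) = \<sigma>" and contr_One: "contr (X(v := One)) = \<sigma>(v := True)"
    using \<open>X v = Zero\<close> unfolding \<sigma>_def by (auto simp: contr_def fun_eq_iff)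
  have "X(v := Zero) = X"
    using \<open>X v = Zero\<close> by auto
  then have "lifted_pi \<theta> \<mu> X = \<mu> \<sigma> * config_weight_off \<theta> v X"
    using config_weight_fun_upd[of \<theta> X v Zero] by (simp add: lifted_pi_eq \<sigma>_def spin_weight_def)
  moreover have "lifted_pi \<theta> \<mu> (X(v := One)) = \<mu> (\<sigma>(v := True)) * (\<theta> * config_weight_off \<theta> v X)"
    unfolding lifted_pi_eq contr_One config_weight_fun_upd by (simp add: spin_weight_def)
  moreover have "sgd_site \<theta> \<mu> v X (X(v := One)) = cond_marg (tilt \<theta> \<mu>) v \<sigma> True"
    "sgd_site \<theta> \<mu> v (X(v := One)) X = cond_marg (tilt \<theta> \<mu>) v \<sigma> False"
    using \<open>X v = Zero\<close> by (auto simp: sgd_site_def contr_One \<sigma>_def)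
  ultimately show ?thesis
    using pos unfolding \<sigma>_def[symmetric]
    by (simp add: cond_marg_tilt[of \<mu>, OF nonneg _ \<theta>] \<sigma>_upd)
qed

lemma sgd_site_reversible:
  fixes \<mu> :: "('v::finite \<Rightarrow> bool) \<Rightarrow> real"
  assumes nonneg: "\<And>\<rho>. 0 \<le> \<mu> \<rho>" and \<theta>: "0 < \<theta>"
    and pos: "0 < \<mu> (contr X)" "0 < \<mu> (contr Y)"
  shows "lifted_pi \<theta> \<mu> X * sgd_site \<theta> \<mu> v X Y = lifted_pi \<theta> \<mu> Y * sgd_site \<theta> \<mu> v Y X"
proof -
  consider "X = Y" | "sgd_site \<theta> \<mu> v X Y = 0" "sgd_site \<theta> \<mu> v Y X = 0"
    | "X v = Zero" "Y = X(v := One)" | "Y v = Zero" "X = Y(v := One)"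
  proof (cases "X = Y")
    case False
    show ?thesis
    proof (cases "X v \<noteq> Star \<and> Y v \<noteq> Star \<and> (\<forall>u. u \<noteq> v \<longrightarrow> Y u = X u)")
      case True
      then have agree: "Y = X(v := Y v)" "X = Y(v := X v)"
        by (auto simp: fun_eq_iff)
      then have "X v \<noteq> Y v"
        using \<open>X \<noteq> Y\<close> by (metis fun_upd_triv)
      with True have "X v = Zero \<and> Y v = One \<or> X v = One \<and> Y v = Zero"
        by (cases "X v"; cases "Y v") simp_all
      with agree that(3,4) show ?thesis
        by metis
    next
      case False
      with \<open>X \<noteq> Y\<close> have "sgd_site \<theta> \<mu> v X Y = 0" "sgd_site \<theta> \<mu> v Y X = 0"
        by (auto simp: sgd_site_def)
      then show ?thesis
        by (rule that(2))
    qed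
  qed (rule that(1))
  then show ?thesis
    by cases (simp_all add: sgd_site_detailed_balance[of \<mu>, OF nonneg \<theta>] pos)
qed

lemma sgd_site_mono:
  fixes \<mu> :: "('v::finite \<Rightarrow> bool) \<Rightarrow> real"
  assumes "monotone_system \<mu>" and nonneg: "\<And>\<rho>. 0 \<le> \<mu> \<rho>" and \<theta>: "0 < \<theta>"
    and pos: "0 < \<mu> (contr X)" "0 < \<mu> (contr X')" and le: "tri_le X X'"
    and F: "monotone tri_le (\<le>) F"
  shows "(\<Sum>Y\<in>UNIV. sgd_site \<theta> \<mu> v X Y * F Y) \<le> (\<Sum>Y\<in>UNIV. sgd_site \<theta> \<mu> v X' Y * F Y)"
proof -
  define p where "p = cond_marg (tilt \<theta> \<mu>) v (contr X) True"
  define p' where "p' = cond_marg (tilt \<theta> \<mu>) v (contr X') True"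
  have p: "0 \<le> p" "p \<le> 1" and p': "0 \<le> p'" "p' \<le> 1"
    unfolding p_def p'_def using cond_marg_tilt_True_bounds[of \<mu>, OF nonneg _ \<theta>] pos by auto
  have F_Zero: "F (X(v := Zero)) \<le> F (X(v := One))"
    by (rule monotoneD[OF F], rule tri_le_fun_upd_Zero)
  have sum_X: "(\<Sum>Y\<in>UNIV. sgd_site \<theta> \<mu> v X Y * F Y) = (1 - p) * F (X(v := Zero)) + p * F (X(v := One))"
    if "X v \<noteq> Star"
    using that by (simp add: sgd_site_sum cond_marg_tilt_False[of \<mu>, OF nonneg pos(1) \<theta>] p_def)
  show ?thesis
  proof (cases "X' v = Star")
    case True
    \<comment> \<open>the update of X' at v is trivial, and every update of X at v stays below X'\<close>
    then have sum_X': "(\<Sum>Y\<in>UNIV. sgd_site \<theta> \<mu> v X' Y * F Y) = F X'"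
      by (simp add: sgd_site_sum)
    show ?thesis
    proof (cases "X v = Star")
      case True
      then show ?thesis
        using sum_X' monotoneD[OF F, OF le] by (simp add: sgd_site_sum)
    next
      case False
      have "F (X(v := a)) \<le> F X'" for a
        by (intro monotoneD[OF F] tri_le_fun_upd_Star le \<open>X' v = Star\<close>)
      then have "(1 - p) * F (X(v := Zero)) + p * F (X(v := One)) \<le> (1 - p) * F X' + p * F X'"
        using p by (intro add_mono mult_left_mono) auto
      also have "\<dots> = F X'"
        by (simp add: algebra_simps)
      finally show ?thesis
        using sum_X[OF False] sum_X' by simp
    qed
  next
    case False
    have "p \<le> p'"
      unfolding p_def p'_def
      using cond_marg_tilt_mono[of \<mu>, OF assms(1) nonneg pos tri_le_contr[OF le] \<theta>] .
    moreover have "F (X(v := a)) \<le> F (X'(v := a))" for a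
      by (intro monotoneD[OF F] tri_le_fun_upd le)
    ultimately have "(1 - p) * F (X(v := Zero)) + p * F (X(v := One)) \<le>
        (1 - p') * F (X'(v := Zero)) + p' * F (X'(v := One))"
      using p p' F_Zero by (intro convex_comb_mono) auto
    moreover have "(\<Sum>Y\<in>UNIV. sgd_site \<theta> \<mu> v X' Y * F Y) =
        (1 - p') * F (X'(v := Zero)) + p' * F (X'(v := One))"
      using False by (simp add: sgd_site_sum cond_marg_tilt_False[of \<mu>, OF nonneg pos(2) \<theta>] p'_def)
    ultimately show ?thesis
      using sum_X tri_le_not_Star[OF le False] by simp
  qed
qed

lemma P_sGD_MC:
  fixes \<mu> :: "('v::finite \<Rightarrow> bool) \<Rightarrow> real"
  assumes "monotone_system \<mu>" and nonneg: "\<And>\<rho>. 0 \<le> \<mu> \<rho>" and \<theta>: "0 < \<theta>" "\<theta> < 1"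
  shows "MC (lifted_pi \<theta> \<mu>) (P_sGD \<theta> \<mu>)"
  unfolding MC_def P_sGD_eq_site_average
proof
  show "reversible_wrt (lifted_pi \<theta> \<mu>) (site_average (sgd_site \<theta> \<mu>))"
    by (rule reversible_wrt_site_average)
      (simp add: supp_lifted_pi_iff[OF \<theta>] sgd_site_reversible[of \<mu>, OF nonneg \<theta>(1)])
  show "stoch_monotone (lifted_pi \<theta> \<mu>) (site_average (sgd_site \<theta> \<mu>))"
    by (rule stoch_monotone_site_average)
      (simp_all add: supp_lifted_pi_iff[OF \<theta>] sgd_site_zero_outside_supp[of \<mu>, OF nonneg]
        sgd_site_mono[of \<mu>, OF assms(1) nonneg \<theta>(1)])
qed

section \<open>The Glauber dynamics of the lifted measure\<close>

definition heat_bath :: "(('v \<Rightarrow> 'a::finite) \<Rightarrow> real) \<Rightarrow> 'v \<Rightarrow> ('v \<Rightarrow> 'a) \<Rightarrow> ('v \<Rightarrow> 'a) \<Rightarrow> real" where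
  "heat_bath \<nu> v X Y = (if \<forall>u. u \<noteq> v \<longrightarrow> Y u = X u then cond_marg \<nu> v X (Y v) else 0)"

lemma P_piGD_eq_site_average: "P_piGD \<theta> \<mu> = site_average (heat_bath (lifted_pi \<theta> \<mu>))"
  by (simp add: fun_eq_iff P_piGD_def site_average_def heat_bath_def)

lemma heat_bath_reversible: "\<nu> X * heat_bath \<nu> v X Y = \<nu> Y * heat_bath \<nu> v Y X"
proof (cases "\<forall>u. u \<noteq> v \<longrightarrow> Y u = X u")
  case True
  then have "X(v := Y v) = Y"
    by (auto simp: fun_eq_iff)
  moreover from this have "cond_marg \<nu> v Y = cond_marg \<nu> v X"
    using cond_marg_fun_upd[of \<nu> v X "Y v"] by simp
  ultimately show ?thesis
    using True by (auto simp: heat_bath_def cond_marg_def)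
qed (auto simp: heat_bath_def)

lemma heat_bath_zero:
  assumes "\<nu> Y = 0"
  shows "heat_bath \<nu> v X Y = 0"
proof (cases "\<forall>u. u \<noteq> v \<longrightarrow> Y u = X u")
  case True
  then have "X(v := Y v) = Y"
    by (auto simp: fun_eq_iff)
  with True assms show ?thesis
    by (simp add: heat_bath_def cond_marg_def)
qed (auto simp: heat_bath_def)

lemma heat_bath_sum:
  fixes X :: "'v::finite \<Rightarrow> 'a::finite"
  shows "(\<Sum>Y\<in>UNIV. heat_bath \<nu> v X Y * F Y) = (\<Sum>a\<in>UNIV. cond_marg \<nu> v X a * F (X(v := a)))"
  using sum_agree_off[of v X "\<lambda>Y. cond_marg \<nu> v X (Y v) * F Y"]
  by (simp add: heat_bath_def if_distrib[of "\<lambda>x. x * _"] cong: if_cong)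

lemma heat_bath_lifted_pi_sum:
  fixes \<mu> :: "('v::finite \<Rightarrow> bool) \<Rightarrow> real"
  assumes "\<And>\<rho>. 0 \<le> \<mu> \<rho>" and "0 < \<theta>" "\<theta> < 1" and "0 < \<mu> (contr X)"
  shows "(\<Sum>Y\<in>UNIV. heat_bath (lifted_pi \<theta> \<mu>) v X Y * F Y) =
    (1 - cond_marg \<mu> v (contr X) True) * F (X(v := Zero)) +
    cond_marg \<mu> v (contr X) True * upper_mix \<theta> F v X"
  unfolding heat_bath_sum sum_UNIV_tri
  by (simp add: cond_marg_lifted_pi[OF assms(2,3)] spin_weight_def
      cond_marg_False_eq[of \<mu>, OF assms(1,4)] upper_mix_def algebra_simps)

lemma heat_bath_lifted_pi_mono:
  fixes \<mu> :: "('v::finite \<Rightarrow> bool) \<Rightarrow> real"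
  assumes "monotone_system \<mu>" and nonneg: "\<And>\<rho>. 0 \<le> \<mu> \<rho>" and \<theta>: "0 < \<theta>" "\<theta> < 1"
    and pos: "0 < \<mu> (contr X)" "0 < \<mu> (contr X')" and le: "tri_le X X'"
    and F: "monotone tri_le (\<le>) F"
  shows "(\<Sum>Y\<in>UNIV. heat_bath (lifted_pi \<theta> \<mu>) v X Y * F Y) \<le>
    (\<Sum>Y\<in>UNIV. heat_bath (lifted_pi \<theta> \<mu>) v X' Y * F Y)"
  unfolding heat_bath_lifted_pi_sum[of \<mu>, OF nonneg \<theta> pos(1)] heat_bath_lifted_pi_sum[of \<mu>, OF nonneg \<theta> pos(2)]
proof (rule convex_comb_mono)
  show "cond_marg \<mu> v (contr X) True \<le> cond_marg \<mu> v (contr X') True"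
    using monotone_systemD[of \<mu>, OF assms(1) nonneg pos tri_le_contr[OF le]] .
  show "F (X(v := Zero)) \<le> F (X'(v := Zero))"
    by (rule monotoneD[OF F], rule tri_le_fun_upd[OF le])
  show "F (X(v := Zero)) \<le> upper_mix \<theta> F v X"
    using upper_mix_ge_Zero[OF F] \<theta> by simp
  show "upper_mix \<theta> F v X \<le> upper_mix \<theta> F v X'"
    using upper_mix_mono[OF F _ _ le] \<theta> by simp
qed (use cond_marg_True_bounds[of \<mu>, OF nonneg] pos in auto)

lemma P_piGD_MC:
  fixes \<mu> :: "('v::finite \<Rightarrow> bool) \<Rightarrow> real"
  assumes "monotone_system \<mu>" and nonneg: "\<And>\<rho>. 0 \<le> \<mu> \<rho>" and \<theta>: "0 < \<theta>" "\<theta> < 1"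
  shows "MC (lifted_pi \<theta> \<mu>) (P_piGD \<theta> \<mu>)"
  unfolding MC_def P_piGD_eq_site_average
proof
  show "reversible_wrt (lifted_pi \<theta> \<mu>) (site_average (heat_bath (lifted_pi \<theta> \<mu>)))"
    by (rule reversible_wrt_site_average) (rule heat_bath_reversible)
  show "stoch_monotone (lifted_pi \<theta> \<mu>) (site_average (heat_bath (lifted_pi \<theta> \<mu>)))"
  proof (rule stoch_monotone_site_average)
    show "heat_bath (lifted_pi \<theta> \<mu>) v X Y = 0" if "Y \<notin> supp (lifted_pi \<theta> \<mu>)" for v X Y
      using that lifted_pi_nonneg[of \<mu>, OF nonneg \<theta>, of Y] unfolding supp_def
      by (intro heat_bath_zero) simp
  qed (simp add: supp_lifted_pi_iff[OF \<theta>] heat_bath_lifted_pi_mono[of \<mu>, OF assms(1) nonneg \<theta>])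
qed

theorem lemma3p5:
  fixes \<mu> :: "('v::finite \<Rightarrow> bool) \<Rightarrow> real" and \<theta> :: real
  assumes "is_distr \<mu>" and "monotone_system \<mu>" and "0 < \<theta>" and "\<theta> < 1"
  shows "MC (lifted_pi \<theta> \<mu>) (P_cl \<theta>) \<and>
         MC (lifted_pi \<theta> \<mu>) (P_sGD \<theta> \<mu>) \<and>
         MC (lifted_pi \<theta> \<mu>) (P_piGD \<theta> \<mu>)"
proof -
  have nonneg: "\<And>\<rho>. 0 \<le> \<mu> \<rho>"
    using \<open>is_distr \<mu>\<close> by (simp add: is_distr_def)
  show ?thesis
    using P_cl_MC[OF assms(3,4)] P_sGD_MC[of \<mu>, OF assms(2) nonneg assms(3,4)]
      P_piGD_MC[of \<mu>, OF assms(2) nonneg assms(3,4)] by blast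
qed

end
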